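(* Let $(x(t),p(t))$ be a solution of Hamilton's equations $x_j'=\partial H/\partial p_j$, $p_j'=-\partial H/\partial x_j$ ($1\le j\le n+1$) for $H(x,p)=\tfrac12\sum_{j=1}^{n+1}\xi_j(x)^2p_j^2$ with initial condition $x(0)=x^0$, $p(0)=p^0$. Define $R_{n+1}(t):=|p_{n+1}(t)|$ and recursively $R_j(t):=\sqrt{R_{j+1}(t)^2x_j(t)^{2\alpha_j}+p_j(t)^2}$ for $1\le j\le n$. Then each $R_j^2$ is constant in $t$, with $R_{n+1}^2=(p^0_{n+1})^2$ and $R_j^2=R_{j+1}^2(x^0_j)^{2\alpha_j}+(p^0_j)^2$ for $1\le j\le n$.
   Context: Here $n\ge1$, $\alpha=(\alpha_1,\dots,\alpha_n)\in(\mathbb{N}\cup\{0\})^n$, and $\xi_j(x)=\prod_{i=1}^{j-1}x_i^{\alpha_i}$ for $x\in\mathbb{R}^{n+1}$ (empty product $=1$); this $H$ is the sub-Riemannian Hamiltonian of the Grushin space $\mathbb{G}^{n+1}_\alpha$ generated by $X_j=\xi_j\partial_{x_j}$. *)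

theory Defs
  imports "HOL-Analysis.Analysis"
begin

text \<open>Points of R^(n+1) are represented as functions nat => real, using the
coordinates 1..n+1 (other coordinates are irrelevant).\<close>

definition xi :: "(nat \<Rightarrow> nat) \<Rightarrow> nat \<Rightarrow> (nat \<Rightarrow> real) \<Rightarrow> real" where
  "xi alpha j x = (\<Prod>i\<in>{1..<j}. x i ^ alpha i)"

definition grushin_H :: "nat \<Rightarrow> (nat \<Rightarrow> nat) \<Rightarrow> (nat \<Rightarrow> real) \<Rightarrow> (nat \<Rightarrow> real) \<Rightarrow> real" where
  "grushin_H n alpha x p = 1/2 * (\<Sum>j=1..n+1. (xi alpha j x)^2 * (p j)^2)"

definition dH_dx :: "nat \<Rightarrow> (nat \<Rightarrow> nat) \<Rightarrow> (nat \<Rightarrow> real) \<Rightarrow> (nat \<Rightarrow> real) \<Rightarrow> nat \<Rightarrow> real" where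
  "dH_dx n alpha x p j = deriv (\<lambda>s. grushin_H n alpha (x(j := s)) p) (x j)"

definition dH_dp :: "nat \<Rightarrow> (nat \<Rightarrow> nat) \<Rightarrow> (nat \<Rightarrow> real) \<Rightarrow> (nat \<Rightarrow> real) \<Rightarrow> nat \<Rightarrow> real" where
  "dH_dp n alpha x p j = deriv (\<lambda>s. grushin_H n alpha x (p(j := s))) (p j)"

text \<open>Raux m = R_{n+1-m}: R_{n+1} = |p_{n+1}|,
  R_j = sqrt (R_{j+1}^2 x_j^(2 alpha_j) + p_j^2).\<close>
fun Raux :: "nat \<Rightarrow> (nat \<Rightarrow> nat) \<Rightarrow> (nat \<Rightarrow> real) \<Rightarrow> (nat \<Rightarrow> real) \<Rightarrow> nat \<Rightarrow> real" where
  "Raux n alpha x p 0 = \<bar>p (n+1)\<bar>"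
| "Raux n alpha x p (Suc m) =
     sqrt ((Raux n alpha x p m)^2 * (x (n - m)) ^ (2 * alpha (n - m)) + (p (n - m))^2)"

definition R :: "nat \<Rightarrow> (nat \<Rightarrow> nat) \<Rightarrow> (nat \<Rightarrow> real) \<Rightarrow> (nat \<Rightarrow> real) \<Rightarrow> nat \<Rightarrow> real" where
  "R n alpha x p j = Raux n alpha x p (n + 1 - j)"

end

theory Submission
  imports Defs
begin

text \<open>The tail sums of the Hamiltonian are governed by the R_j:
  \<open>\<Sum>k=j..n+1. \<xi>\<^sub>k\<^sup>2 p\<^sub>k\<^sup>2 = \<xi>\<^sub>j\<^sup>2 R\<^sub>j\<^sup>2\<close>, and \<open>\<xi>\<^sub>k\<close> involves only \<open>x\<^sub>i\<close> with \<open>i < k\<close>.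
  Hence H depends on \<open>p\<^sub>j\<close> only through \<open>\<xi>\<^sub>j\<^sup>2 p\<^sub>j\<^sup>2 / 2\<close>, on \<open>x\<^sub>j\<close> (for \<open>j \<le> n\<close>)
  only through \<open>\<xi>\<^sub>j\<^sup>2 R\<^sub>j\<^sub>+\<^sub>1\<^sup>2 x\<^sub>j\<^bsup>2\<alpha>\<^sub>j\<^esup> / 2\<close>, and not at all on \<open>x\<^sub>n\<^sub>+\<^sub>1\<close>.
  Differentiating \<open>R\<^sub>j\<^sup>2 = R\<^sub>j\<^sub>+\<^sub>1\<^sup>2 x\<^sub>j\<^bsup>2\<alpha>\<^sub>j\<^esup> + p\<^sub>j\<^sup>2\<close> along the flow, the two
  contributions of Hamilton's equations cancel, so \<open>(R\<^sub>j\<^sup>2)' = (R\<^sub>j\<^sub>+\<^sub>1\<^sup>2)' x\<^sub>j\<^bsup>2\<alpha>\<^sub>j\<^esup>\<close>;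
  descending induction from \<open>(p\<^sub>n\<^sub>+\<^sub>1\<^sup>2)' = 0\<close> shows that every \<open>R\<^sub>j\<^sup>2\<close> is constant.\<close>

lemma R_squared_rec:
  assumes "1 \<le> j" "j \<le> n"
  shows "(R n alpha x p j)^2 = (R n alpha x p (j+1))^2 * x j ^ (2 * alpha j) + (p j)^2"
proof -
  have "n + 1 - j = Suc (n - j)" "n - (n - j) = j" "n + 1 - (j+1) = n - j"
    using assms by auto
  moreover have "0 \<le> x j ^ (2 * alpha j)"
    by (simp add: power_mult)
  ultimately show ?thesis
    unfolding R_def by (simp add: mult.commute)
qed

lemma R_last_squared: "(R n alpha x p (n+1))^2 = (p (n+1))^2"
  unfolding R_def by simp

lemma Raux_cong:
  "(\<And>i. n + 1 - m \<le> i \<Longrightarrow> x' i = x i \<and> p' i = p i) \<Longrightarrow>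
    Raux n alpha x' p' m = Raux n alpha x p m"
  by (induction m) auto

lemma R_cong:
  assumes "j \<le> n+1" "\<And>i. j \<le> i \<Longrightarrow> x' i = x i \<and> p' i = p i"
  shows "R n alpha x' p' j = R n alpha x p j"
  unfolding R_def by (rule Raux_cong) (use assms in auto)

lemma xi_fun_upd_ge: "j \<le> k \<Longrightarrow> xi alpha j (x(k := s)) = xi alpha j x"
  unfolding xi_def by (intro prod.cong) auto

lemma xi_Suc: "1 \<le> j \<Longrightarrow> xi alpha (j+1) x = xi alpha j x * x j ^ alpha j"
  unfolding xi_def by (simp add: prod.atLeastLessThan_Suc)

lemma sum_tail_eq_xi_R:
  assumes "1 \<le> j" "j \<le> n+1"
  shows "(\<Sum>k=j..n+1. (xi alpha k x)^2 * (p k)^2) = (xi alpha j x)^2 * (R n alpha x p j)^2"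
  using assms(2,1)
proof (induction j rule: inc_induct)
  case base
  show ?case using R_last_squared[of n alpha x p] by simp
next
  case (step j)
  have "(\<Sum>k=j..n+1. (xi alpha k x)^2 * (p k)^2)
      = (xi alpha j x)^2 * (p j)^2 + (\<Sum>k=Suc j..n+1. (xi alpha k x)^2 * (p k)^2)"
    using step.hyps by (simp add: sum.atLeast_Suc_atMost)
  also have "\<dots> = (xi alpha j x)^2 * (p j)^2 + (xi alpha (j+1) x)^2 * (R n alpha x p (j+1))^2"
    using step by simp
  also have "\<dots> = (xi alpha j x)^2 * (R n alpha x p j)^2"
    using step xi_Suc[of j alpha x] R_squared_rec[of j n alpha x p]
    by (simp add: power_mult_distrib power_mult[symmetric] algebra_simps)
  finally show ?case .
qed

lemma grushin_H_split:
  assumes "1 \<le> j" "j \<le> n+1"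
  shows "grushin_H n alpha x p =
    1/2 * ((\<Sum>k\<in>{1..<j}. (xi alpha k x)^2 * (p k)^2) + (xi alpha j x)^2 * (R n alpha x p j)^2)"
proof -
  have "{1..n+1} = {1..<j} \<union> {j..n+1}"
    using assms by auto
  then show ?thesis
    unfolding grushin_H_def sum_tail_eq_xi_R[OF assms, symmetric]
    by (simp add: sum.union_disjoint ivl_disj_int)
qed

lemma grushin_H_fun_upd_p:
  assumes "j \<in> {1..n+1}"
  shows "grushin_H n alpha x (p(j := s)) =
    grushin_H n alpha x p + 1/2 * (xi alpha j x)^2 * (s^2 - (p j)^2)"
proof -
  have upd: "(\<Sum>k=1..n+1. (xi alpha k x)^2 * ((p(j := s)) k)^2) =
      (xi alpha j x)^2 * s^2 + (\<Sum>k\<in>{1..n+1} - {j}. (xi alpha k x)^2 * (p k)^2)"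
    using assms by (subst sum.remove[of _ j]) (auto intro!: sum.cong)
  have orig: "(\<Sum>k=1..n+1. (xi alpha k x)^2 * (p k)^2) =
      (xi alpha j x)^2 * (p j)^2 + (\<Sum>k\<in>{1..n+1} - {j}. (xi alpha k x)^2 * (p k)^2)"
    using assms by (subst sum.remove[of _ j]) auto
  show ?thesis
    unfolding grushin_H_def upd orig by (simp add: field_simps)
qed

lemma grushin_H_fun_upd_x_last: "grushin_H n alpha (x(n+1 := s)) p = grushin_H n alpha x p"
  unfolding grushin_H_def by (intro arg_cong[where f = "(*) _"] sum.cong) (simp_all add: xi_fun_upd_ge)

lemma dH_dp_eq:
  assumes "j \<in> {1..n+1}"
  shows "dH_dp n alpha x p j = (xi alpha j x)^2 * p j"
proof -
  have "((\<lambda>s. grushin_H n alpha x p + 1/2 * (xi alpha j x)^2 * (s^2 - (p j)^2))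
      has_real_derivative (xi alpha j x)^2 * p j) (at (p j))"
    by (auto intro!: derivative_eq_intros)
  then show ?thesis
    unfolding dH_dp_def grushin_H_fun_upd_p[OF assms] by (rule DERIV_imp_deriv)
qed

lemma dH_dx_eq:
  assumes "1 \<le> j" "j \<le> n"
  shows "dH_dx n alpha x p j =
    (xi alpha j x)^2 * (R n alpha x p (j+1))^2 * alpha j * x j ^ (2 * alpha j - 1)"
proof -
  define A where "A = (\<Sum>k\<in>{1..<j}. (xi alpha k x)^2 * (p k)^2)"
  define B where "B = (R n alpha x p (j+1))^2"
  have H_x_j: "(\<lambda>s. grushin_H n alpha (x(j := s)) p) =
      (\<lambda>s. 1/2 * (A + (xi alpha j x)^2 * (B * s ^ (2 * alpha j) + (p j)^2)))"
  proof
    fix s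
    have "(\<Sum>k\<in>{1..<j}. (xi alpha k (x(j := s)))^2 * (p k)^2) = A"
      unfolding A_def by (intro sum.cong refl) (simp add: xi_fun_upd_ge)
    moreover have "R n alpha (x(j := s)) p (j+1) = R n alpha x p (j+1)"
      by (rule R_cong) (use assms in auto)
    ultimately show "grushin_H n alpha (x(j := s)) p =
        1/2 * (A + (xi alpha j x)^2 * (B * s ^ (2 * alpha j) + (p j)^2))"
      using assms grushin_H_split[of j n alpha "x(j := s)" p]
        R_squared_rec[of j n alpha "x(j := s)" p]
      by (simp add: B_def xi_fun_upd_ge)
  qed
  have "((\<lambda>s. 1/2 * (A + (xi alpha j x)^2 * (B * s ^ (2 * alpha j) + (p j)^2)))
      has_real_derivative (xi alpha j x)^2 * B * alpha j * x j ^ (2 * alpha j - 1)) (at (x j))"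
    by (auto intro!: derivative_eq_intros)
  then show ?thesis
    unfolding dH_dx_def H_x_j B_def by (rule DERIV_imp_deriv)
qed

lemma dH_dx_last: "dH_dx n alpha x p (n+1) = 0"
  unfolding dH_dx_def grushin_H_fun_upd_x_last by simp

lemma R_squared_has_derivative_zero:
  assumes "t \<in> I" "j \<in> {1..n+1}"
    and x_deriv: "\<And>t j. t \<in> I \<Longrightarrow> j \<in> {1..n+1} \<Longrightarrow>
           ((\<lambda>s. x s j) has_real_derivative dH_dp n alpha (x t) (p t) j) (at t within I)"
    and p_deriv: "\<And>t j. t \<in> I \<Longrightarrow> j \<in> {1..n+1} \<Longrightarrow>
           ((\<lambda>s. p s j) has_real_derivative - dH_dx n alpha (x t) (p t) j) (at t within I)"
  shows "((\<lambda>t. (R n alpha (x t) (p t) j)^2) has_real_derivative 0) (at t within I)"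
proof -
  define F where "F j t = (R n alpha (x t) (p t) j)^2" for j t
  have "j \<le> n+1" "1 \<le> j"
    using assms(2) by auto
  then have "(F j has_real_derivative 0) (at t within I)"
  proof (induction j rule: inc_induct)
    case base
    have "((\<lambda>t. (p t (n+1))^2) has_real_derivative
        2 * (- dH_dx n alpha (x t) (p t) (n+1)) * p t (n+1)) (at t within I)"
      using p_deriv[of t "n+1"] \<open>t \<in> I\<close> by (auto intro!: derivative_eq_intros)
    then show ?case
      unfolding F_def R_last_squared dH_dx_last by simp
  next
    case (step j)
    have j: "1 \<le> j" "j \<le> n"
      using step by auto
    have F_j: "F j = (\<lambda>t. F (j+1) t * (x t j)^(2 * alpha j) + (p t j)^2)"
      unfolding F_def using R_squared_rec[OF j] by auto
    have "((\<lambda>s. x s j) has_real_derivative (xi alpha j (x t))^2 * p t j) (at t within I)"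
      using x_deriv[of t j] \<open>t \<in> I\<close> j by (simp add: dH_dp_eq)
    moreover have "((\<lambda>s. p s j) has_real_derivative
        - ((xi alpha j (x t))^2 * F (j+1) t * alpha j * x t j ^ (2 * alpha j - 1))) (at t within I)"
      using p_deriv[of t j] \<open>t \<in> I\<close> j by (simp add: dH_dx_eq F_def)
    ultimately have "(F j has_real_derivative
        0 * (x t j)^(2 * alpha j)
        + (2 * alpha j * ((xi alpha j (x t))^2 * p t j * (x t j)^(2 * alpha j - 1))) * F (j+1) t
        + 2 * (- ((xi alpha j (x t))^2 * F (j+1) t * alpha j * x t j ^ (2 * alpha j - 1))) * p t j)
        (at t within I)"
      unfolding F_j using step.IH j by (auto intro!: derivative_eq_intros)
    then show ?case
      by (rule DERIV_cong) (simp add: algebra_simps)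
  qed
  then show ?thesis
    unfolding F_def .
qed

theorem mainTheorem7:
  fixes n :: nat and alpha :: "nat \<Rightarrow> nat"
    and x p :: "real \<Rightarrow> nat \<Rightarrow> real" and x0 p0 :: "nat \<Rightarrow> real" and I :: "real set"
  assumes "n \<ge> 1"
    and "is_interval I" and "0 \<in> I"
    and "x 0 = x0" and "p 0 = p0"
    and "\<And>t j. t \<in> I \<Longrightarrow> j \<in> {1..n+1} \<Longrightarrow>
           ((\<lambda>s. x s j) has_real_derivative dH_dp n alpha (x t) (p t) j) (at t within I)"
    and "\<And>t j. t \<in> I \<Longrightarrow> j \<in> {1..n+1} \<Longrightarrow>
           ((\<lambda>s. p s j) has_real_derivative - dH_dx n alpha (x t) (p t) j) (at t within I)"
  shows "\<forall>t\<in>I. (\<forall>j\<in>{1..n+1}. (R n alpha (x t) (p t) j)^2 = (R n alpha x0 p0 j)^2)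
            \<and> (R n alpha (x t) (p t) (n+1))^2 = (p0 (n+1))^2
            \<and> (\<forall>j\<in>{1..n}. (R n alpha (x t) (p t) j)^2
                   = (R n alpha (x t) (p t) (j+1))^2 * (x0 j)^(2 * alpha j) + (p0 j)^2)"
proof -
  have R_const: "(R n alpha (x t) (p t) j)^2 = (R n alpha x0 p0 j)^2"
    if t: "t \<in> I" and j: "j \<in> {1..n+1}" for t j
  proof -
    obtain c where "\<forall>s\<in>I. (R n alpha (x s) (p s) j)^2 = c"
      using has_field_derivative_zero_constant[OF is_interval_convex[OF assms(2)]]
        R_squared_has_derivative_zero[OF _ j assms(6,7)] by blast
    then show ?thesis
      using t assms(3-5) by force
  qed
  show ?thesis
  proof (intro ballI conjI)
    fix t assume "t \<in> I"
    show "(R n alpha (x t) (p t) (n+1))^2 = (p0 (n+1))^2"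
      using R_const[OF \<open>t \<in> I\<close>, of "n+1"] R_last_squared[of n alpha x0 p0] by simp
    fix j assume "j \<in> {1..n}"
    then show "(R n alpha (x t) (p t) j)^2
        = (R n alpha (x t) (p t) (j+1))^2 * (x0 j)^(2 * alpha j) + (p0 j)^2"
      using R_const[OF \<open>t \<in> I\<close>, of j] R_const[OF \<open>t \<in> I\<close>, of "j+1"]
        R_squared_rec[of j n alpha x0 p0] by simp
  qed (use R_const in blast)
qed

end
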